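(* Consider an instance with $D_i=1$ for all $i\in\mathcal D$ and nonnegative integer capacities $C_j$, and let $k=|\mathcal F|$. Then the minimum delay over all $k$-regionalized solutions equals the cost of a minimum cost assignment of the instance.
   Context: An instance consists of finite sets $\mathcal D$ (demand nodes) and $\mathcal F$ (FCs), finite nonnegative travel times $\ell_{ij}$, demands $D_i\ge0$ and capacities $C_j\ge0$ with $\sum_iD_i\le\sum_jC_j$. An assignment is $x\in\mathbb R_{\ge0}^{\mathcal D\times\mathcal F}$ with $\sum_jx_{ij}=D_i$ for all $i$ and $\sum_ix_{ij}\le C_j$ for all $j$; its cost is $\sum_{ij}\ell_{ij}x_{ij}$, and a minimum cost assignment has minimum cost. An equilibrium solution is a pair $(x,\beta)$ with $x$ an assignment and $\beta\in\mathbb R^{\mathcal F}_{\ge0}$ such that $x_{ij}>0$ only if $j\in\arg\min_{j'}(\ell_{ij'}+\beta_{j'})$, and $\beta_j=0$ whenever $\sum_ix_{ij}<C_j$; its delay is $\sum_iD_i\delta_i$ with $\delta_i=\min_j(\ell_{ij}+\beta_j)$. An $r$-regionalized solution consists of partitions $\mathcal D=\mathcal D_1\sqcup\dots\sqcup\mathcal D_r$, $\mathcal F=\mathcal F_1\sqcup\dots\sqcup\mathcal F_r$ (parts may be empty) with $\sum_{i\in\mathcal D_s}D_i\le\sum_{j\in\mathcal F_s}C_j$ for each $s$, together with an equilibrium solution of each sub-instance $(\mathcal D_s,\mathcal F_s)$; its delay is the sum of the delays of these $r$ equilibrium solutions. *)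

theory Defs
  imports Main "HOL.Real"
begin

text \<open>An instance: demand nodes DD, FCs FF (finite sets), travel times l, demands Dm, capacities C.
  An assignment x is given on DD x FF (values outside are irrelevant).\<close>

definition is_assignment ::
  "'d set \<Rightarrow> 'f set \<Rightarrow> ('d \<Rightarrow> real) \<Rightarrow> ('f \<Rightarrow> real) \<Rightarrow> ('d \<Rightarrow> 'f \<Rightarrow> real) \<Rightarrow> bool" where
  "is_assignment DD FF Dm C x \<longleftrightarrow>
     (\<forall>i\<in>DD. \<forall>j\<in>FF. 0 \<le> x i j) \<and>
     (\<forall>i\<in>DD. (\<Sum>j\<in>FF. x i j) = Dm i) \<and>
     (\<forall>j\<in>FF. (\<Sum>i\<in>DD. x i j) \<le> C j)"

definition assignment_cost ::
  "'d set \<Rightarrow> 'f set \<Rightarrow> ('d \<Rightarrow> 'f \<Rightarrow> real) \<Rightarrow> ('d \<Rightarrow> 'f \<Rightarrow> real) \<Rightarrow> real" where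
  "assignment_cost DD FF l x = (\<Sum>i\<in>DD. \<Sum>j\<in>FF. l i j * x i j)"

definition is_equilibrium ::
  "'d set \<Rightarrow> 'f set \<Rightarrow> ('d \<Rightarrow> 'f \<Rightarrow> real) \<Rightarrow> ('d \<Rightarrow> real) \<Rightarrow> ('f \<Rightarrow> real)
    \<Rightarrow> ('d \<Rightarrow> 'f \<Rightarrow> real) \<Rightarrow> ('f \<Rightarrow> real) \<Rightarrow> bool" where
  "is_equilibrium DD FF l Dm C x \<beta> \<longleftrightarrow>
     is_assignment DD FF Dm C x \<and>
     (\<forall>j\<in>FF. 0 \<le> \<beta> j) \<and>
     (\<forall>i\<in>DD. \<forall>j\<in>FF. 0 < x i j \<longrightarrow> l i j + \<beta> j = (MIN j'\<in>FF. l i j' + \<beta> j')) \<and>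
     (\<forall>j\<in>FF. (\<Sum>i\<in>DD. x i j) < C j \<longrightarrow> \<beta> j = 0)"

definition eq_delay ::
  "'d set \<Rightarrow> 'f set \<Rightarrow> ('d \<Rightarrow> 'f \<Rightarrow> real) \<Rightarrow> ('d \<Rightarrow> real) \<Rightarrow> ('f \<Rightarrow> real) \<Rightarrow> real" where
  "eq_delay DD FF l Dm \<beta> = (\<Sum>i\<in>DD. Dm i * (MIN j\<in>FF. l i j + \<beta> j))"

text \<open>r-regionalized solution: the partitions are given by labellings pd, pf into parts
  0..r-1 (parts may be empty); part s carries the equilibrium solution (xs s, bs s).\<close>
definition is_regionalized ::
  "nat \<Rightarrow> 'd set \<Rightarrow> 'f set \<Rightarrow> ('d \<Rightarrow> 'f \<Rightarrow> real) \<Rightarrow> ('d \<Rightarrow> real) \<Rightarrow> ('f \<Rightarrow> real)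
    \<Rightarrow> ('d \<Rightarrow> nat) \<Rightarrow> ('f \<Rightarrow> nat) \<Rightarrow> (nat \<Rightarrow> 'd \<Rightarrow> 'f \<Rightarrow> real) \<Rightarrow> (nat \<Rightarrow> 'f \<Rightarrow> real) \<Rightarrow> bool" where
  "is_regionalized r DD FF l Dm C pd pf xs bs \<longleftrightarrow>
     (\<forall>i\<in>DD. pd i < r) \<and> (\<forall>j\<in>FF. pf j < r) \<and>
     (\<forall>s<r. (\<Sum>i\<in>{i\<in>DD. pd i = s}. Dm i) \<le> (\<Sum>j\<in>{j\<in>FF. pf j = s}. C j) \<and>
            is_equilibrium {i\<in>DD. pd i = s} {j\<in>FF. pf j = s} l Dm C (xs s) (bs s))"

definition reg_delay ::
  "nat \<Rightarrow> 'd set \<Rightarrow> 'f set \<Rightarrow> ('d \<Rightarrow> 'f \<Rightarrow> real) \<Rightarrow> ('d \<Rightarrow> real)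
    \<Rightarrow> ('d \<Rightarrow> nat) \<Rightarrow> ('f \<Rightarrow> nat) \<Rightarrow> (nat \<Rightarrow> 'f \<Rightarrow> real) \<Rightarrow> real" where
  "reg_delay r DD FF l Dm pd pf bs =
     (\<Sum>s<r. eq_delay {i\<in>DD. pd i = s} {j\<in>FF. pf j = s} l Dm (bs s))"

end

theory Submission
  imports Defs "HOL-Library.FuncSet"
begin

text \<open>
  Some minimum cost assignment is integral. Append a slack row for unused capacity. Then
  an assignment is a transportation plan whose row and column sums are integers. In such a
  plan every row and column that has a non-integral entry has at least two. The non-integral
  cells therefore contain a cycle, alternating between rows and columns. Moving the plan along
  this cycle, in whichever direction does not increase the cost, until some entry becomes an
  integer removes a non-integral cell. With unit demands an integral assignment sends each
  demand node to a single FC. Making every FC its own region, with all prices zero, gives a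
  |F|-regionalized solution whose delay is the cost.
  Conversely, gluing the equilibria of any regionalized solution gives an assignment of the
  whole instance. In an equilibrium a node only uses FCs minimizing l i j + \<beta> j, and
  \<beta> \<ge> 0, so its cost is at most its delay.
\<close>

lemma first_repetition:
  fixes w :: "nat \<Rightarrow> 'a"
  assumes "finite V" and "\<And>k. w k \<in> V"
  shows "\<exists>p q. p < q \<and> w p = w q \<and> inj_on w {..<q}"
proof -
  have "\<not> inj_on w {..card V}"
  proof
    assume "inj_on w {..card V}"
    then have "card {..card V} \<le> card V"
      using card_inj_on_le[of w "{..card V}" V] assms by blast
    then show False by simp
  qed
  then have ex: "\<exists>q p. p < q \<and> w p = w q"
    unfolding inj_on_def by (metis linorder_neqE_nat)
  define q where "q = (LEAST q. \<exists>p. p < q \<and> w p = w q)"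
  obtain p where "p < q" "w p = w q"
    using LeastI_ex[OF ex] unfolding q_def by blast
  moreover have "inj_on w {..<q}"
  proof (rule inj_onI, rule ccontr)
    fix i j assume "i \<in> {..<q}" "j \<in> {..<q}" "w i = w j" "i \<noteq> j"
    then have "q \<le> max i j"
      unfolding q_def by (intro Least_le) (metis linorder_neqE_nat max.commute max.strict_order_iff)
    then show False using \<open>i \<in> {..<q}\<close> \<open>j \<in> {..<q}\<close> by auto
  qed
  ultimately show ?thesis by blast
qed

fun second_order_seq :: "('a \<Rightarrow> 'a \<Rightarrow> 'a) \<Rightarrow> 'a \<Rightarrow> 'a \<Rightarrow> nat \<Rightarrow> 'a" where
  "second_order_seq f a b 0 = a"
| "second_order_seq f a b (Suc 0) = b"
| "second_order_seq f a b (Suc (Suc n)) =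
     f (second_order_seq f a b n) (second_order_seq f a b (Suc n))"

lemma nonbacktracking_walk_exists:
  assumes extend: "\<And>u v. adj u v \<Longrightarrow> \<exists>v'. adj v v' \<and> v' \<noteq> u" and "adj a b"
  shows "\<exists>w. (\<forall>k. adj (w k) (w (Suc k))) \<and> (\<forall>k. w (Suc (Suc k)) \<noteq> w k)"
proof -
  define next_vertex where "next_vertex u v = (SOME v'. adj v v' \<and> v' \<noteq> u)" for u v
  have next_vertex: "adj v (next_vertex u v) \<and> next_vertex u v \<noteq> u" if "adj u v" for u v
    unfolding next_vertex_def using someI_ex[OF extend[OF that]] .
  define w where "w = second_order_seq next_vertex a b"
  have adj_w: "adj (w k) (w (Suc k))" for k
  proof (induction k)
    case 0
    then show ?case using \<open>adj a b\<close> by (simp add: w_def)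
  next
    case (Suc k)
    then show ?case using next_vertex[OF Suc] by (simp add: w_def)
  qed
  moreover have "w (Suc (Suc k)) \<noteq> w k" for k
    using next_vertex[OF adj_w[of k]] by (simp add: w_def)
  ultimately show ?thesis by blast
qed

lemma sum_of_bool_conj_eq_image:
  assumes "finite A" and "inj f" and "P \<Longrightarrow> x \<in> f ` A"
  shows "(\<Sum>a\<in>A. of_bool (P \<and> x = f a) :: real) = of_bool P"
proof (cases P)
  case True
  then obtain a0 where "a0 \<in> A" "x = f a0" using assms(3) by blast
  then have "(\<Sum>a\<in>A. of_bool (P \<and> x = f a) :: real) = (\<Sum>a\<in>A. if a0 = a then 1 else 0)"
    using True \<open>inj f\<close> by (intro sum.cong) (auto dest: injD)
  then show ?thesis using \<open>finite A\<close> \<open>a0 \<in> A\<close> True by simp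
qed simp

definition bipartite_adj :: "('r \<times> 'c) set \<Rightarrow> 'r + 'c \<Rightarrow> 'r + 'c \<Rightarrow> bool" where
  "bipartite_adj N u v \<longleftrightarrow>
     (\<exists>r c. (r, c) \<in> N \<and> (u = Inl r \<and> v = Inr c \<or> u = Inr c \<and> v = Inl r))"

definition walk_flow :: "(nat \<Rightarrow> 'r + 'c) \<Rightarrow> nat \<Rightarrow> nat \<Rightarrow> 'r \<Rightarrow> 'c \<Rightarrow> real" where
  "walk_flow w p q r c =
     (\<Sum>k = p..<q. of_bool (w k = Inl r \<and> w (Suc k) = Inr c)
                 - of_bool (w k = Inr c \<and> w (Suc k) = Inl r))"

lemma walk_flow_nonzero_imp_mem:
  assumes "\<And>k. bipartite_adj N (w k) (w (Suc k))" and "walk_flow w p q r c \<noteq> 0"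
  shows "(r, c) \<in> N"
proof -
  obtain k where "of_bool (w k = Inl r \<and> w (Suc k) = Inr c)
      - of_bool (w k = Inr c \<and> w (Suc k) = Inl r) \<noteq> (0::real)"
    using assms(2) unfolding walk_flow_def by (meson sum.neutral)
  then show ?thesis using assms(1)[of k] unfolding bipartite_adj_def by (auto split: if_splits)
qed

lemma walk_flow_row_sum:
  assumes "finite Cl" and "N \<subseteq> R \<times> Cl" and adj: "\<And>k. bipartite_adj N (w k) (w (Suc k))"
    and "p \<le> q" and "w p = w q"
  shows "(\<Sum>c\<in>Cl. walk_flow w p q r c) = 0"
proof -
  have out: "(\<Sum>c\<in>Cl. of_bool (w k = Inl r \<and> w (Suc k) = Inr c) :: real) = of_bool (w k = Inl r)"
    and into: "(\<Sum>c\<in>Cl. of_bool (w (Suc k) = Inl r \<and> w k = Inr c) :: real) = of_bool (w (Suc k) = Inl r)"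
    for k
    using assms(1,2) adj[of k] unfolding bipartite_adj_def
    by (auto intro!: sum_of_bool_conj_eq_image)
  have "(\<Sum>c\<in>Cl. walk_flow w p q r c)
      = (\<Sum>k = p..<q. (\<Sum>c\<in>Cl. of_bool (w k = Inl r \<and> w (Suc k) = Inr c))
                    - (\<Sum>c\<in>Cl. of_bool (w (Suc k) = Inl r \<and> w k = Inr c)))"
    unfolding walk_flow_def sum_subtractf[symmetric] by (subst sum.swap) (simp only: conj_commute)
  also have "\<dots> = (\<Sum>k = p..<q. of_bool (w k = Inl r) - of_bool (w (Suc k) = Inl r))"
    by (simp only: out into)
  also have "\<dots> = 0"
    using sum_Suc_diff'[OF \<open>p \<le> q\<close>, of "\<lambda>k. of_bool (w k = Inl r) :: real"] \<open>w p = w q\<close>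
    by (simp add: sum_subtractf)
  finally show ?thesis .
qed

lemma walk_flow_col_sum:
  assumes "finite R" and "N \<subseteq> R \<times> Cl" and adj: "\<And>k. bipartite_adj N (w k) (w (Suc k))"
    and "p \<le> q" and "w p = w q"
  shows "(\<Sum>r\<in>R. walk_flow w p q r c) = 0"
proof -
  have into: "(\<Sum>r\<in>R. of_bool (w (Suc k) = Inr c \<and> w k = Inl r) :: real) = of_bool (w (Suc k) = Inr c)"
    and out: "(\<Sum>r\<in>R. of_bool (w k = Inr c \<and> w (Suc k) = Inl r) :: real) = of_bool (w k = Inr c)"
    for k
    using assms(1,2) adj[of k] unfolding bipartite_adj_def
    by (auto intro!: sum_of_bool_conj_eq_image)
  have "(\<Sum>r\<in>R. walk_flow w p q r c)
      = (\<Sum>k = p..<q. (\<Sum>r\<in>R. of_bool (w (Suc k) = Inr c \<and> w k = Inl r))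
                    - (\<Sum>r\<in>R. of_bool (w k = Inr c \<and> w (Suc k) = Inl r)))"
    unfolding walk_flow_def sum_subtractf[symmetric] by (subst sum.swap) (simp only: conj_commute)
  also have "\<dots> = (\<Sum>k = p..<q. of_bool (w (Suc k) = Inr c) - of_bool (w k = Inr c))"
    by (simp only: out into)
  also have "\<dots> = 0"
    using sum_Suc_diff'[OF \<open>p \<le> q\<close>, of "\<lambda>k. of_bool (w k = Inr c) :: real"] \<open>w p = w q\<close>
    by simp
  finally show ?thesis .
qed

lemma walk_flow_first_edge_nonzero:
  assumes adj: "\<And>k. bipartite_adj N (w k) (w (Suc k))"
    and nonbacktracking: "\<And>k. w (Suc (Suc k)) \<noteq> w k"
    and "p < q" and "w p = w q" and inj: "inj_on w {..<q}"
  shows "\<exists>r c. walk_flow w p q r c \<noteq> 0"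
proof -
  have "w p \<noteq> w (Suc p)" using adj[of p] unfolding bipartite_adj_def by auto
  then have "Suc p < q" using \<open>p < q\<close> \<open>w p = w q\<close> by (metis Suc_lessI)
  txt \<open>The first edge of the cycle is traversed once forwards and, since the cycle is simple
    and does not backtrack, never backwards.\<close>
  have forward: "(w k = w p \<and> w (Suc k) = w (Suc p)) \<longleftrightarrow> k = p" if "k \<in> {p..<q}" for k
    using that inj_onD[OF inj, of k p] \<open>p < q\<close> by auto
  have backward: "\<not> (w k = w (Suc p) \<and> w (Suc k) = w p)" if "k \<in> {p..<q}" for k
  proof
    assume reversed: "w k = w (Suc p) \<and> w (Suc k) = w p"
    then have "Suc k = q"
      using that inj_onD[OF inj, of "Suc k" p] \<open>p < q\<close> by (cases "Suc k < q") auto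
    then have "k = Suc p"
      using that reversed inj_onD[OF inj, of k "Suc p"] \<open>Suc p < q\<close> by auto
    then show False using reversed \<open>Suc k = q\<close> \<open>w p = w q\<close> nonbacktracking[of p] by simp
  qed
  from adj[of p] obtain r c
    where "w p = Inl r \<and> w (Suc p) = Inr c \<or> w p = Inr c \<and> w (Suc p) = Inl r"
    unfolding bipartite_adj_def by blast
  then have "walk_flow w p q r c = (\<Sum>k = p..<q. of_bool (k = p)) \<or>
             walk_flow w p q r c = (\<Sum>k = p..<q. - of_bool (k = p))"
  proof (elim disjE conjE)
    assume "w p = Inl r" "w (Suc p) = Inr c"
    then show ?thesis
      unfolding walk_flow_def using forward backward by (intro disjI1 sum.cong refl) auto
  next
    assume "w p = Inr c" "w (Suc p) = Inl r"
    then show ?thesis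
      unfolding walk_flow_def using forward backward by (intro disjI2 sum.cong refl) auto
  qed
  then have "walk_flow w p q r c \<noteq> 0" using \<open>p < q\<close> by (auto simp: sum_negf)
  then show ?thesis by blast
qed

lemma exists_circulation:
  fixes N :: "('r \<times> 'c) set"
  assumes "finite R" and "finite Cl" and N: "N \<subseteq> R \<times> Cl" and "(r0, c0) \<in> N"
    and row_degree: "\<And>r c. (r, c) \<in> N \<Longrightarrow> \<exists>c'. c' \<noteq> c \<and> (r, c') \<in> N"
    and col_degree: "\<And>r c. (r, c) \<in> N \<Longrightarrow> \<exists>r'. r' \<noteq> r \<and> (r', c) \<in> N"
  shows "\<exists>d :: 'r \<Rightarrow> 'c \<Rightarrow> real.
     (\<forall>r\<in>R. (\<Sum>c\<in>Cl. d r c) = 0) \<and> (\<forall>c\<in>Cl. (\<Sum>r\<in>R. d r c) = 0) \<and>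
     (\<forall>r c. d r c \<noteq> 0 \<longrightarrow> (r, c) \<in> N) \<and> (\<exists>r c. d r c \<noteq> 0)"
proof -
  have "\<exists>v'. bipartite_adj N v v' \<and> v' \<noteq> u" if uv: "bipartite_adj N u v" for u v
  proof -
    obtain r c where "(r, c) \<in> N" and "u = Inl r \<and> v = Inr c \<or> u = Inr c \<and> v = Inl r"
      using uv unfolding bipartite_adj_def by blast
    then show ?thesis
    proof (elim disjE conjE)
      assume "u = Inl r" "v = Inr c"
      moreover obtain r' where "r' \<noteq> r" "(r', c) \<in> N" using col_degree[OF \<open>(r, c) \<in> N\<close>] by blast
      ultimately show ?thesis unfolding bipartite_adj_def by (intro exI[of _ "Inl r'"]) auto
    next
      assume "u = Inr c" "v = Inl r"
      moreover obtain c' where "c' \<noteq> c" "(r, c') \<in> N" using row_degree[OF \<open>(r, c) \<in> N\<close>] by blast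
      ultimately show ?thesis unfolding bipartite_adj_def by (intro exI[of _ "Inr c'"]) auto
    qed
  qed
  moreover have "bipartite_adj N (Inl r0) (Inr c0)"
    using \<open>(r0, c0) \<in> N\<close> unfolding bipartite_adj_def by blast
  ultimately obtain w where adj: "\<And>k. bipartite_adj N (w k) (w (Suc k))"
    and nonbacktracking: "\<And>k. w (Suc (Suc k)) \<noteq> w k"
    using nonbacktracking_walk_exists by metis
  have "w k \<in> Inl ` R \<union> Inr ` Cl" for k
    using adj[of k] N unfolding bipartite_adj_def by blast
  then obtain p q where pq: "p < q" "w p = w q" "inj_on w {..<q}"
    using first_repetition[of "Inl ` R \<union> Inr ` Cl" w] \<open>finite R\<close> \<open>finite Cl\<close> by blast
  have "\<forall>r\<in>R. (\<Sum>c\<in>Cl. walk_flow w p q r c) = 0"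
    using walk_flow_row_sum[of Cl N R w] \<open>finite Cl\<close> N adj pq by auto
  moreover have "\<forall>c\<in>Cl. (\<Sum>r\<in>R. walk_flow w p q r c) = 0"
    using walk_flow_col_sum[of R N Cl w] \<open>finite R\<close> N adj pq by auto
  moreover have "\<forall>r c. walk_flow w p q r c \<noteq> 0 \<longrightarrow> (r, c) \<in> N"
    using walk_flow_nonzero_imp_mem[of N w] adj by blast
  moreover have "\<exists>r c. walk_flow w p q r c \<noteq> 0"
    using walk_flow_first_edge_nonzero[OF adj nonbacktracking pq] .
  ultimately show ?thesis by blast
qed

lemma exists_step_to_integer:
  fixes y d :: "'e \<Rightarrow> real"
  assumes "finite T" and "T \<noteq> {}" and nonint: "\<And>e. e \<in> T \<Longrightarrow> y e \<notin> \<int>"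
    and nonzero: "\<And>e. e \<in> T \<Longrightarrow> d e \<noteq> 0"
  shows "\<exists>t>0. (\<forall>e\<in>T. of_int \<lfloor>y e\<rfloor> \<le> y e + t * d e \<and> y e + t * d e \<le> of_int \<lceil>y e\<rceil>) \<and>
               (\<exists>e\<in>T. y e + t * d e \<in> \<int>)"
proof -
  define target :: "'e \<Rightarrow> real"
    where "target e = (if d e > 0 then of_int \<lceil>y e\<rceil> else of_int \<lfloor>y e\<rfloor>)" for e
  define t where "t = Min ((\<lambda>e. (target e - y e) / d e) ` T)"
  have strict: "of_int \<lfloor>y e\<rfloor> < y e" "y e < of_int \<lceil>y e\<rceil>" if "e \<in> T" for e
    using nonint[OF that] of_int_floor_le[of "y e"] le_of_int_ceiling[of "y e"]
    by (metis Ints_of_int order_less_le)+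
  have ratio_pos: "(target e - y e) / d e > 0" if "e \<in> T" for e
    using strict[OF that] nonzero[OF that] unfolding target_def
    by (auto simp: divide_pos_pos divide_neg_neg)
  have "t \<in> (\<lambda>e. (target e - y e) / d e) ` T"
    unfolding t_def using assms(1,2) by (intro Min_in) auto
  then obtain e0 where "e0 \<in> T" and t_e0: "t = (target e0 - y e0) / d e0" by blast
  have "t > 0" using ratio_pos[OF \<open>e0 \<in> T\<close>] t_e0 by simp
  moreover have "of_int \<lfloor>y e\<rfloor> \<le> y e + t * d e \<and> y e + t * d e \<le> of_int \<lceil>y e\<rceil>" if "e \<in> T" for e
  proof -
    have "t \<le> (target e - y e) / d e" unfolding t_def using \<open>finite T\<close> that by simp
    then show ?thesis
      using strict[OF that] nonzero[OF that] \<open>t > 0\<close> unfolding target_def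
      by (cases "d e > 0") (auto simp: le_divide_eq mult_nonneg_nonpos mult_pos_pos
          intro: order_trans[of _ "y e"] mult_neg_pos)
  qed
  moreover have "y e0 + t * d e0 = target e0"
    using t_e0 nonzero[OF \<open>e0 \<in> T\<close>] by simp
  then have "y e0 + t * d e0 \<in> \<int>" unfolding target_def by simp
  ultimately show ?thesis using \<open>e0 \<in> T\<close> by blast
qed

definition nonintegral_cells :: "'r set \<Rightarrow> 'c set \<Rightarrow> ('r \<Rightarrow> 'c \<Rightarrow> real) \<Rightarrow> ('r \<times> 'c) set" where
  "nonintegral_cells R Cl y = {(r, c) \<in> R \<times> Cl. y r c \<notin> \<int>}"

lemma finite_nonintegral_cells: "finite R \<Longrightarrow> finite Cl \<Longrightarrow> finite (nonintegral_cells R Cl y)"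
  unfolding nonintegral_cells_def by (rule finite_subset[of _ "R \<times> Cl"]) auto

lemma circulation_step:
  fixes y w d :: "'r \<Rightarrow> 'c \<Rightarrow> real"
  assumes "finite R" and "finite Cl" and nonneg: "\<forall>r\<in>R. \<forall>c\<in>Cl. 0 \<le> y r c"
    and rows: "\<forall>r\<in>R. (\<Sum>c\<in>Cl. d r c) = 0" and cols: "\<forall>c\<in>Cl. (\<Sum>r\<in>R. d r c) = 0"
    and support: "\<forall>r c. d r c \<noteq> 0 \<longrightarrow> (r, c) \<in> nonintegral_cells R Cl y"
    and "\<exists>r c. d r c \<noteq> 0"
  shows "\<exists>y'. (\<forall>r\<in>R. \<forall>c\<in>Cl. 0 \<le> y' r c) \<and>
    (\<forall>r\<in>R. (\<Sum>c\<in>Cl. y' r c) = (\<Sum>c\<in>Cl. y r c)) \<and>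
    (\<forall>c\<in>Cl. (\<Sum>r\<in>R. y' r c) = (\<Sum>r\<in>R. y r c)) \<and>
    (\<Sum>r\<in>R. \<Sum>c\<in>Cl. w r c * y' r c) \<le> (\<Sum>r\<in>R. \<Sum>c\<in>Cl. w r c * y r c) \<and>
    nonintegral_cells R Cl y' \<subset> nonintegral_cells R Cl y"
proof -
  txt \<open>The sign s orients d so that moving along it does not increase the cost.\<close>
  define s :: real where "s = (if (\<Sum>r\<in>R. \<Sum>c\<in>Cl. w r c * d r c) \<le> 0 then 1 else -1)"
  have "s \<noteq> 0" and s_cost: "s * (\<Sum>r\<in>R. \<Sum>c\<in>Cl. w r c * d r c) \<le> 0"
    unfolding s_def by auto
  define T where "T = {(r, c). d r c \<noteq> 0}"
  have T_sub: "T \<subseteq> nonintegral_cells R Cl y" using support unfolding T_def by auto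
  then have "finite T"
    using finite_nonintegral_cells[OF \<open>finite R\<close> \<open>finite Cl\<close>] by (rule finite_subset)
  obtain t where "t > 0"
    and bounds: "\<forall>(r, c)\<in>T. of_int \<lfloor>y r c\<rfloor> \<le> y r c + t * (s * d r c)"
    and hit: "\<exists>(r, c)\<in>T. y r c + t * (s * d r c) \<in> \<int>"
    using exists_step_to_integer[OF \<open>finite T\<close>, of "case_prod y" "\<lambda>(r, c). s * d r c"]
      \<open>\<exists>r c. d r c \<noteq> 0\<close> T_sub \<open>s \<noteq> 0\<close>
    unfolding T_def nonintegral_cells_def by fastforce
  define y' where "y' r c = y r c + t * (s * d r c)" for r c
  have "0 \<le> y' r c" if "r \<in> R" "c \<in> Cl" for r c
  proof (cases "d r c = 0")
    case False
    then have "of_int \<lfloor>y r c\<rfloor> \<le> y' r c" using bounds unfolding T_def y'_def by auto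
    moreover have "0 \<le> \<lfloor>y r c\<rfloor>" using nonneg that by simp
    ultimately show ?thesis by linarith
  qed (use nonneg that y'_def in auto)
  moreover have "\<forall>r\<in>R. (\<Sum>c\<in>Cl. y' r c) = (\<Sum>c\<in>Cl. y r c)"
    using rows unfolding y'_def by (simp add: sum.distrib sum_distrib_left[symmetric])
  moreover have "\<forall>c\<in>Cl. (\<Sum>r\<in>R. y' r c) = (\<Sum>r\<in>R. y r c)"
    using cols unfolding y'_def by (simp add: sum.distrib sum_distrib_left[symmetric])
  moreover have "(\<Sum>r\<in>R. \<Sum>c\<in>Cl. w r c * y' r c)
      = (\<Sum>r\<in>R. \<Sum>c\<in>Cl. w r c * y r c) + t * (s * (\<Sum>r\<in>R. \<Sum>c\<in>Cl. w r c * d r c))"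
    unfolding y'_def by (simp add: algebra_simps sum.distrib sum_distrib_left)
  moreover have "t * (s * (\<Sum>r\<in>R. \<Sum>c\<in>Cl. w r c * d r c)) \<le> 0"
    using \<open>t > 0\<close> s_cost by (simp add: mult_nonneg_nonpos)
  moreover have "nonintegral_cells R Cl y' \<subseteq> nonintegral_cells R Cl y"
    using support unfolding nonintegral_cells_def y'_def by force
  moreover have "\<not> nonintegral_cells R Cl y \<subseteq> nonintegral_cells R Cl y'"
    using hit T_sub unfolding nonintegral_cells_def y'_def by fastforce
  ultimately show ?thesis by (intro exI[of _ y']) auto
qed

lemma Ints_sum_imp_Ints:
  assumes "finite A" and "a \<in> A" and "sum f A \<in> \<int>" and "\<And>b. b \<in> A - {a} \<Longrightarrow> f b \<in> \<int>"
  shows "f a \<in> \<int>"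
proof -
  have "f a = sum f A - sum f (A - {a})"
    using assms(1,2) by (simp add: sum.remove)
  moreover have "sum f (A - {a}) \<in> \<int>" using assms(4) by (rule Ints_sum)
  ultimately show ?thesis using assms(3) by (simp add: Ints_diff)
qed

lemma integral_transport_le:
  fixes y w :: "'r \<Rightarrow> 'c \<Rightarrow> real"
  assumes "finite R" and "finite Cl" and "\<forall>r\<in>R. \<forall>c\<in>Cl. 0 \<le> y r c"
    and "\<forall>r\<in>R. (\<Sum>c\<in>Cl. y r c) \<in> \<int>" and "\<forall>c\<in>Cl. (\<Sum>r\<in>R. y r c) \<in> \<int>"
  shows "\<exists>y'. (\<forall>r\<in>R. \<forall>c\<in>Cl. 0 \<le> y' r c \<and> y' r c \<in> \<int>) \<and>
    (\<forall>r\<in>R. (\<Sum>c\<in>Cl. y' r c) = (\<Sum>c\<in>Cl. y r c)) \<and>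
    (\<forall>c\<in>Cl. (\<Sum>r\<in>R. y' r c) = (\<Sum>r\<in>R. y r c)) \<and>
    (\<Sum>r\<in>R. \<Sum>c\<in>Cl. w r c * y' r c) \<le> (\<Sum>r\<in>R. \<Sum>c\<in>Cl. w r c * y r c)"
  using assms(3-5)
proof (induction "card (nonintegral_cells R Cl y)" arbitrary: y rule: less_induct)
  case less
  define N where "N = nonintegral_cells R Cl y"
  show ?case
  proof (cases "N = {}")
    case True
    then show ?thesis using less.prems unfolding N_def nonintegral_cells_def by blast
  next
    case False
    then obtain r0 c0 where "(r0, c0) \<in> N" by auto
    have N_sub: "N \<subseteq> R \<times> Cl" unfolding N_def nonintegral_cells_def by auto
    have "\<exists>c'. c' \<noteq> c \<and> (r, c') \<in> N" if "(r, c) \<in> N" for r c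
      using that less.prems(2) Ints_sum_imp_Ints[OF \<open>finite Cl\<close>, of c "y r"]
      unfolding N_def nonintegral_cells_def by blast
    moreover have "\<exists>r'. r' \<noteq> r \<and> (r', c) \<in> N" if "(r, c) \<in> N" for r c
      using that less.prems(3) Ints_sum_imp_Ints[OF \<open>finite R\<close>, of r "\<lambda>r. y r c"]
      unfolding N_def nonintegral_cells_def by blast
    ultimately obtain d :: "'r \<Rightarrow> 'c \<Rightarrow> real"
      where "\<forall>r\<in>R. (\<Sum>c\<in>Cl. d r c) = 0" "\<forall>c\<in>Cl. (\<Sum>r\<in>R. d r c) = 0"
        "\<forall>r c. d r c \<noteq> 0 \<longrightarrow> (r, c) \<in> N" "\<exists>r c. d r c \<noteq> 0"
      using exists_circulation[OF \<open>finite R\<close> \<open>finite Cl\<close> N_sub \<open>(r0, c0) \<in> N\<close>] by blast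
    then obtain y1 where y1: "\<forall>r\<in>R. \<forall>c\<in>Cl. 0 \<le> y1 r c"
      "\<forall>r\<in>R. (\<Sum>c\<in>Cl. y1 r c) = (\<Sum>c\<in>Cl. y r c)"
      "\<forall>c\<in>Cl. (\<Sum>r\<in>R. y1 r c) = (\<Sum>r\<in>R. y r c)"
      "(\<Sum>r\<in>R. \<Sum>c\<in>Cl. w r c * y1 r c) \<le> (\<Sum>r\<in>R. \<Sum>c\<in>Cl. w r c * y r c)"
      "nonintegral_cells R Cl y1 \<subset> N"
      using circulation_step[OF \<open>finite R\<close> \<open>finite Cl\<close> less.prems(1), of d w] unfolding N_def by blast
    have "card (nonintegral_cells R Cl y1) < card (nonintegral_cells R Cl y)"
      using psubset_card_mono[OF _ y1(5)] finite_nonintegral_cells[OF \<open>finite R\<close> \<open>finite Cl\<close>]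
      unfolding N_def by blast
    then obtain y' where "\<forall>r\<in>R. \<forall>c\<in>Cl. 0 \<le> y' r c \<and> y' r c \<in> \<int>"
      "\<forall>r\<in>R. (\<Sum>c\<in>Cl. y' r c) = (\<Sum>c\<in>Cl. y1 r c)"
      "\<forall>c\<in>Cl. (\<Sum>r\<in>R. y' r c) = (\<Sum>r\<in>R. y1 r c)"
      "(\<Sum>r\<in>R. \<Sum>c\<in>Cl. w r c * y' r c) \<le> (\<Sum>r\<in>R. \<Sum>c\<in>Cl. w r c * y1 r c)"
      using less.hyps[of y1] y1(1-3) less.prems(2,3) by auto
    then show ?thesis using y1(2-4) by (intro exI[of _ y']) auto
  qed
qed

lemma is_assignment_cong:
  assumes "\<And>i j. i \<in> DD \<Longrightarrow> j \<in> FF \<Longrightarrow> x i j = x' i j"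
  shows "is_assignment DD FF Dm C x \<longleftrightarrow> is_assignment DD FF Dm C x'"
  using assms unfolding is_assignment_def by (simp cong: sum.cong)

lemma assignment_cost_cong:
  assumes "\<And>i j. i \<in> DD \<Longrightarrow> j \<in> FF \<Longrightarrow> x i j = x' i j"
  shows "assignment_cost DD FF l x = assignment_cost DD FF l x'"
  using assms unfolding assignment_cost_def by (simp cong: sum.cong)

lemma assignment_exists:
  assumes "finite DD" and "\<forall>i\<in>DD. 0 \<le> Dm i" and "\<forall>j\<in>FF. 0 \<le> C j"
    and "(\<Sum>i\<in>DD. Dm i) \<le> (\<Sum>j\<in>FF. C j)"
  shows "\<exists>x. is_assignment DD FF Dm C x"
proof -
  define T where "T = (\<Sum>j\<in>FF. C j)"
  have "0 \<le> T" unfolding T_def using assms(3) by (simp add: sum_nonneg)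
  define x where "x i j = Dm i * C j / T" for i j
  have row: "(\<Sum>j\<in>FF. x i j) = Dm i" if "i \<in> DD" for i
  proof (cases "T = 0")
    case True
    then have "(\<Sum>i\<in>DD. Dm i) = 0"
      using assms(4) sum_nonneg[of DD Dm] assms(2) unfolding T_def by force
    then have "Dm i = 0" using sum_nonneg_eq_0_iff[of DD Dm] assms(1,2) that by blast
    then show ?thesis unfolding x_def by simp
  next
    case False
    then show ?thesis
      unfolding x_def T_def by (simp add: sum_distrib_left[symmetric] sum_divide_distrib[symmetric])
  qed
  have col: "(\<Sum>i\<in>DD. x i j) \<le> C j" if "j \<in> FF" for j
  proof -
    have "(\<Sum>i\<in>DD. x i j) = (\<Sum>i\<in>DD. Dm i) * C j / T"
      unfolding x_def by (simp add: sum_distrib_right sum_divide_distrib)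
    also have "\<dots> \<le> T * C j / T"
      using assms(3,4) that \<open>0 \<le> T\<close> unfolding T_def
      by (intro divide_right_mono mult_right_mono) auto
    also have "\<dots> \<le> C j" using assms(3) that by simp
    finally show ?thesis .
  qed
  have "0 \<le> x i j" if "i \<in> DD" "j \<in> FF" for i j
    unfolding x_def using assms(2,3) that \<open>0 \<le> T\<close> by simp
  then show ?thesis unfolding is_assignment_def using row col by blast
qed

lemma integral_assignment_le:
  assumes "finite DD" and "finite FF" and x: "is_assignment DD FF Dm C x"
    and Dm_int: "\<forall>i\<in>DD. Dm i \<in> \<int>" and C_int: "\<forall>j\<in>FF. C j \<in> \<int>"
  shows "\<exists>x'. is_assignment DD FF Dm C x' \<and> (\<forall>i\<in>DD. \<forall>j\<in>FF. x' i j \<in> \<int>) \<and>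
    assignment_cost DD FF l x' \<le> assignment_cost DD FF l x"
proof -
  txt \<open>Row None holds the unused capacity, so that all row and column sums of y are integers.\<close>
  define R where "R = insert None (Some ` DD)"
  have sum_R: "(\<Sum>r\<in>R. f r) = f None + (\<Sum>i\<in>DD. f (Some i))" for f :: "'a option \<Rightarrow> real"
    unfolding R_def using \<open>finite DD\<close> by (simp add: sum.reindex)
  define y where "y r j = (case r of None \<Rightarrow> C j - (\<Sum>i\<in>DD. x i j) | Some i \<Rightarrow> x i j)" for r j
  define w where "w r j = (case r of None \<Rightarrow> 0 | Some i \<Rightarrow> l i j)" for r j
  have "finite R" unfolding R_def using \<open>finite DD\<close> by simp
  have "\<forall>r\<in>R. \<forall>j\<in>FF. 0 \<le> y r j"
    using x unfolding is_assignment_def R_def y_def by auto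
  moreover have "\<forall>r\<in>R. (\<Sum>j\<in>FF. y r j) \<in> \<int>"
  proof
    fix r assume "r \<in> R"
    show "(\<Sum>j\<in>FF. y r j) \<in> \<int>"
    proof (cases r)
      case None
      have "(\<Sum>j\<in>FF. y r j) = (\<Sum>j\<in>FF. C j) - (\<Sum>i\<in>DD. \<Sum>j\<in>FF. x i j)"
        using None unfolding y_def by (simp add: sum_subtractf sum.swap[of _ FF])
      also have "\<dots> = (\<Sum>j\<in>FF. C j) - (\<Sum>i\<in>DD. Dm i)"
        using x unfolding is_assignment_def by simp
      finally show ?thesis using Dm_int C_int by (simp add: Ints_diff Ints_sum)
    next
      case (Some i)
      then show ?thesis using \<open>r \<in> R\<close> x Dm_int unfolding R_def y_def is_assignment_def by auto
    qed
  qed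
  moreover have col_sums: "(\<Sum>r\<in>R. y r j) = C j" for j
    unfolding sum_R y_def by simp
  ultimately obtain y' where y': "\<forall>r\<in>R. \<forall>j\<in>FF. 0 \<le> y' r j \<and> y' r j \<in> \<int>"
    "\<forall>r\<in>R. (\<Sum>j\<in>FF. y' r j) = (\<Sum>j\<in>FF. y r j)" "\<forall>j\<in>FF. (\<Sum>r\<in>R. y' r j) = (\<Sum>r\<in>R. y r j)"
    "(\<Sum>r\<in>R. \<Sum>j\<in>FF. w r j * y' r j) \<le> (\<Sum>r\<in>R. \<Sum>j\<in>FF. w r j * y r j)"
    using integral_transport_le[OF \<open>finite R\<close> \<open>finite FF\<close>, of y w] C_int by auto
  define x' where "x' i j = y' (Some i) j" for i j
  have "(\<Sum>i\<in>DD. x' i j) \<le> C j" if "j \<in> FF" for j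
  proof -
    have "y' None j + (\<Sum>i\<in>DD. x' i j) = C j"
      using y'(3) that col_sums[of j] sum_R[of "\<lambda>r. y' r j"] unfolding x'_def by simp
    moreover have "0 \<le> y' None j" using y'(1) that unfolding R_def by simp
    ultimately show ?thesis by linarith
  qed
  then have "is_assignment DD FF Dm C x'"
    using y'(1,2) x unfolding is_assignment_def x'_def R_def y_def by auto
  moreover have "\<forall>i\<in>DD. \<forall>j\<in>FF. x' i j \<in> \<int>"
    using y'(1) unfolding x'_def R_def by blast
  moreover have "assignment_cost DD FF l x' \<le> assignment_cost DD FF l x"
    using y'(4) unfolding sum_R assignment_cost_def w_def x'_def y_def by simp
  ultimately show ?thesis by blast
qed

lemma nonneg_Ints_sum_eq_1:
  fixes v :: "'a \<Rightarrow> real"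
  assumes "finite A" and v: "\<forall>a\<in>A. 0 \<le> v a \<and> v a \<in> \<int>" and "sum v A = 1"
  shows "\<exists>a\<in>A. \<forall>b\<in>A. v b = of_bool (b = a)"
proof -
  obtain a where "a \<in> A" "v a \<noteq> 0"
    using \<open>sum v A = 1\<close> by (metis sum.neutral zero_neq_one)
  then have "1 \<le> v a" using v by (auto elim!: Ints_cases)
  moreover have "sum v A = v a + sum v (A - {a})"
    using \<open>finite A\<close> \<open>a \<in> A\<close> by (simp add: sum.remove)
  moreover have "0 \<le> sum v (A - {a})" using v by (intro sum_nonneg) auto
  ultimately have "v a = 1" and "sum v (A - {a}) = 0" using \<open>sum v A = 1\<close> by linarith+
  then have "\<forall>b\<in>A - {a}. v b = 0"
    using sum_nonneg_eq_0_iff[of "A - {a}" v] \<open>finite A\<close> v by simp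
  then show ?thesis using \<open>a \<in> A\<close> \<open>v a = 1\<close> by auto
qed

definition assignment_of_map :: "('d \<Rightarrow> 'f) \<Rightarrow> 'd \<Rightarrow> 'f \<Rightarrow> real" where
  "assignment_of_map \<sigma> i j = of_bool (\<sigma> i = j)"

lemma integral_unit_assignment_eq_map:
  assumes "finite FF" and x: "is_assignment DD FF (\<lambda>_. 1) C x"
    and x_int: "\<forall>i\<in>DD. \<forall>j\<in>FF. x i j \<in> \<int>"
  shows "\<exists>\<sigma>\<in>DD \<rightarrow>\<^sub>E FF. \<forall>i\<in>DD. \<forall>j\<in>FF. x i j = assignment_of_map \<sigma> i j"
proof -
  have "\<forall>i\<in>DD. \<exists>j\<in>FF. \<forall>j'\<in>FF. x i j' = of_bool (j' = j)"
    using nonneg_Ints_sum_eq_1[OF \<open>finite FF\<close>] x x_int unfolding is_assignment_def by auto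
  then obtain \<sigma> where "\<forall>i\<in>DD. \<sigma> i \<in> FF \<and> (\<forall>j\<in>FF. x i j = of_bool (j = \<sigma> i))"
    by metis
  then show ?thesis
    by (intro bexI[of _ "restrict \<sigma> DD"]) (auto simp: assignment_of_map_def)
qed

lemma min_cost_assignment_of_map:
  assumes "finite DD" and "finite FF" and C_int: "\<forall>j\<in>FF. C j \<in> \<int>"
    and "is_assignment DD FF (\<lambda>_. 1) C x0"
  shows "\<exists>\<sigma>. \<sigma> ` DD \<subseteq> FF \<and> is_assignment DD FF (\<lambda>_. 1) C (assignment_of_map \<sigma>) \<and>
    (\<forall>x. is_assignment DD FF (\<lambda>_. 1) C x \<longrightarrow>
       assignment_cost DD FF l (assignment_of_map \<sigma>) \<le> assignment_cost DD FF l x)"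
proof -
  define S where "S = {\<sigma> \<in> DD \<rightarrow>\<^sub>E FF. is_assignment DD FF (\<lambda>_. 1) C (assignment_of_map \<sigma>)}"
  define cost where "cost \<sigma> = assignment_cost DD FF l (assignment_of_map \<sigma>)" for \<sigma>
  have rounding: "\<exists>\<sigma>\<in>S. cost \<sigma> \<le> assignment_cost DD FF l x"
    if x: "is_assignment DD FF (\<lambda>_. 1) C x" for x
  proof -
    obtain x' where x': "is_assignment DD FF (\<lambda>_. 1) C x'" "\<forall>i\<in>DD. \<forall>j\<in>FF. x' i j \<in> \<int>"
      "assignment_cost DD FF l x' \<le> assignment_cost DD FF l x"
      using integral_assignment_le[OF assms(1,2) x _ C_int, where l = l] by auto
    then obtain \<sigma> where "\<sigma> \<in> DD \<rightarrow>\<^sub>E FF" and eq: "\<forall>i\<in>DD. \<forall>j\<in>FF. x' i j = assignment_of_map \<sigma> i j"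
      using integral_unit_assignment_eq_map[OF \<open>finite FF\<close>] by blast
    have "is_assignment DD FF (\<lambda>_. 1) C (assignment_of_map \<sigma>)"
      using x'(1) is_assignment_cong[of DD FF x' "assignment_of_map \<sigma>"] eq by blast
    moreover have "cost \<sigma> = assignment_cost DD FF l x'"
      using assignment_cost_cong[of DD FF x' "assignment_of_map \<sigma>"] eq unfolding cost_def by simp
    ultimately show ?thesis using \<open>\<sigma> \<in> DD \<rightarrow>\<^sub>E FF\<close> x'(3) unfolding S_def by auto
  qed
  have "finite S" unfolding S_def using assms(1,2) by (simp add: finite_PiE)
  moreover have "S \<noteq> {}" using rounding[OF assms(4)] by blast
  ultimately obtain \<sigma>0 where "\<sigma>0 \<in> S" and least: "\<And>\<sigma>. \<sigma> \<in> S \<Longrightarrow> cost \<sigma>0 \<le> cost \<sigma>"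
    using arg_min_if_finite(1) arg_min_least by metis
  have "cost \<sigma>0 \<le> assignment_cost DD FF l x" if "is_assignment DD FF (\<lambda>_. 1) C x" for x
    using rounding[OF that] least by (meson order_trans)
  moreover have "\<sigma>0 ` DD \<subseteq> FF" and "is_assignment DD FF (\<lambda>_. 1) C (assignment_of_map \<sigma>0)"
    using \<open>\<sigma>0 \<in> S\<close> unfolding S_def by auto
  ultimately show ?thesis unfolding cost_def by blast
qed

lemma equilibrium_row_cost_le:
  assumes "is_equilibrium D F l Dm C x \<beta>" and "i \<in> D"
  shows "(\<Sum>j\<in>F. l i j * x i j) \<le> Dm i * (MIN j\<in>F. l i j + \<beta> j)"
proof -
  define m where "m = (MIN j\<in>F. l i j + \<beta> j)"
  have "l i j * x i j \<le> m * x i j" if "j \<in> F" for j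
  proof (cases "x i j > 0")
    case True
    then have "l i j + \<beta> j = m" and "0 \<le> \<beta> j"
      using assms that unfolding is_equilibrium_def m_def by auto
    then show ?thesis using True by (simp add: mult_right_mono)
  next
    case False
    then have "x i j = 0" using assms that unfolding is_equilibrium_def is_assignment_def by force
    then show ?thesis by simp
  qed
  then have "(\<Sum>j\<in>F. l i j * x i j) \<le> m * (\<Sum>j\<in>F. x i j)"
    by (simp add: sum_distrib_left sum_mono)
  also have "(\<Sum>j\<in>F. x i j) = Dm i"
    using assms unfolding is_equilibrium_def is_assignment_def by auto
  finally show ?thesis unfolding m_def by (simp add: mult.commute)
qed

definition regional_assignment ::
  "('d \<Rightarrow> nat) \<Rightarrow> ('f \<Rightarrow> nat) \<Rightarrow> (nat \<Rightarrow> 'd \<Rightarrow> 'f \<Rightarrow> real) \<Rightarrow> 'd \<Rightarrow> 'f \<Rightarrow> real" where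
  "regional_assignment pd pf xs i j = (if pf j = pd i then xs (pd i) i j else 0)"

lemma is_assignment_regional_assignment:
  assumes "finite DD" and "finite FF" and reg: "is_regionalized r DD FF l Dm C pd pf xs bs"
  shows "is_assignment DD FF Dm C (regional_assignment pd pf xs)"
proof -
  have eq: "is_assignment {i \<in> DD. pd i = s} {j \<in> FF. pf j = s} Dm C (xs s)" if "s < r" for s
    using reg that unfolding is_regionalized_def is_equilibrium_def by blast
  have "(\<Sum>j\<in>FF. regional_assignment pd pf xs i j) = (\<Sum>j\<in>{j \<in> FF. pf j = pd i}. xs (pd i) i j)"
    for i
    unfolding regional_assignment_def sum.inter_filter[OF \<open>finite FF\<close>] by (rule sum.cong) auto
  moreover have "(\<Sum>i\<in>DD. regional_assignment pd pf xs i j) = (\<Sum>i\<in>{i \<in> DD. pd i = pf j}. xs (pf j) i j)"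
    for j
    unfolding regional_assignment_def sum.inter_filter[OF \<open>finite DD\<close>] by (rule sum.cong) auto
  moreover have "\<forall>i\<in>DD. pd i < r" "\<forall>j\<in>FF. pf j < r"
    using reg unfolding is_regionalized_def by auto
  ultimately show ?thesis
    using eq unfolding is_assignment_def by (auto simp: regional_assignment_def)
qed

lemma assignment_cost_regional_assignment_le:
  assumes "finite DD" and "finite FF" and reg: "is_regionalized r DD FF l Dm C pd pf xs bs"
  shows "assignment_cost DD FF l (regional_assignment pd pf xs) \<le> reg_delay r DD FF l Dm pd pf bs"
proof -
  let ?F = "\<lambda>s. {j \<in> FF. pf j = s}"
  have pd: "pd i < r" if "i \<in> DD" for i using reg that unfolding is_regionalized_def by auto
  have "assignment_cost DD FF l (regional_assignment pd pf xs)
      = (\<Sum>i\<in>DD. \<Sum>j\<in>?F (pd i). l i j * xs (pd i) i j)"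
    unfolding assignment_cost_def regional_assignment_def sum.inter_filter[OF \<open>finite FF\<close>]
    by (intro sum.cong refl) auto
  also have "\<dots> \<le> (\<Sum>i\<in>DD. Dm i * (MIN j\<in>?F (pd i). l i j + bs (pd i) j))"
  proof (rule sum_mono)
    fix i assume "i \<in> DD"
    then have "is_equilibrium {i' \<in> DD. pd i' = pd i} (?F (pd i)) l Dm C (xs (pd i)) (bs (pd i))"
      using reg pd[OF \<open>i \<in> DD\<close>] unfolding is_regionalized_def by blast
    then show "(\<Sum>j\<in>?F (pd i). l i j * xs (pd i) i j) \<le> Dm i * (MIN j\<in>?F (pd i). l i j + bs (pd i) j)"
      by (rule equilibrium_row_cost_le) (use \<open>i \<in> DD\<close> in simp)
  qed
  also have "\<dots> = (\<Sum>s<r. \<Sum>i\<in>{i \<in> DD. pd i = s}. Dm i * (MIN j\<in>?F (pd i). l i j + bs (pd i) j))"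
    using \<open>finite DD\<close> pd by (intro sum.group[symmetric]) auto
  also have "\<dots> = reg_delay r DD FF l Dm pd pf bs"
    unfolding reg_delay_def eq_delay_def by (intro sum.cong refl) auto
  finally show ?thesis .
qed

lemma is_equilibrium_singleton_iff:
  "is_equilibrium D {j} l Dm C x (\<lambda>_. 0) \<longleftrightarrow> is_assignment D {j} Dm C x"
  unfolding is_equilibrium_def by simp

lemma regionalized_of_single_sourced:
  fixes DD :: "'d set" and FF :: "'f set" and x :: "'d \<Rightarrow> 'f \<Rightarrow> real"
  assumes "finite DD" and "finite FF" and x: "is_assignment DD FF Dm C x" and "\<sigma> ` DD \<subseteq> FF"
    and single: "\<And>i j. i \<in> DD \<Longrightarrow> j \<in> FF \<Longrightarrow> j \<noteq> \<sigma> i \<Longrightarrow> x i j = 0"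
  shows "\<exists>pd pf xs bs. is_regionalized (card FF) DD FF l Dm C pd pf xs bs \<and>
    reg_delay (card FF) DD FF l Dm pd pf bs = assignment_cost DD FF l x"
proof -
  have row: "(\<Sum>j\<in>FF. f j * x i j) = f (\<sigma> i) * x i (\<sigma> i)" if "i \<in> DD" for i and f :: "'f \<Rightarrow> real"
    using \<open>finite FF\<close> \<open>\<sigma> ` DD \<subseteq> FF\<close> that single by (subst sum.remove) (auto intro!: sum.neutral)
  have x_\<sigma>: "x i (\<sigma> i) = Dm i" if "i \<in> DD" for i
    using row[OF that, of "\<lambda>_. 1"] x that unfolding is_assignment_def by simp
  obtain g where g: "bij_betw g FF {..<card FF}"
    using ex_bij_betw_finite_nat[OF \<open>finite FF\<close>] atLeast0LessThan by metis
  define h where "h = inv_into FF g"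
  have region_F: "{j \<in> FF. g j = s} = {h s}" and h_in: "h s \<in> FF" if "s < card FF" for s
    using that g unfolding h_def
    by (auto simp: bij_betw_def bij_betw_inv_into_right inv_into_into inv_into_f_eq)
  have region_D: "{i \<in> DD. g (\<sigma> i) = s} = {i \<in> DD. \<sigma> i = h s}" if "s < card FF" for s
    using that g \<open>\<sigma> ` DD \<subseteq> FF\<close> region_F by blast
  have load: "(\<Sum>i\<in>{i \<in> DD. \<sigma> i = j}. Dm i) \<le> C j" if "j \<in> FF" for j
  proof -
    have "(\<Sum>i\<in>{i \<in> DD. \<sigma> i = j}. Dm i) = (\<Sum>i\<in>{i \<in> DD. \<sigma> i = j}. x i j)"
      using x_\<sigma> by (intro sum.cong) auto
    also have "\<dots> \<le> (\<Sum>i\<in>DD. x i j)"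
      using x that \<open>finite DD\<close> unfolding is_assignment_def by (intro sum_mono2) auto
    also have "\<dots> \<le> C j" using x that unfolding is_assignment_def by blast
    finally show ?thesis .
  qed
  have "is_regionalized (card FF) DD FF l Dm C (g \<circ> \<sigma>) g (\<lambda>_. x) (\<lambda>_ _. 0)"
    unfolding is_regionalized_def
  proof (intro conjI ballI allI impI)
    fix s assume "s < card FF"
    then have "h s \<in> FF" by (rule h_in)
    with \<open>s < card FF\<close> show "(\<Sum>i\<in>{i \<in> DD. (g \<circ> \<sigma>) i = s}. Dm i) \<le> (\<Sum>j\<in>{j \<in> FF. g j = s}. C j)"
      using load[OF \<open>h s \<in> FF\<close>] region_F region_D by simp
    have row_s: "x i (h s) = Dm i" if "i \<in> {i \<in> DD. \<sigma> i = h s}" for i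
      using that x_\<sigma> by force
    have "is_assignment {i \<in> DD. \<sigma> i = h s} {h s} Dm C x"
      unfolding is_assignment_def
    proof (intro conjI ballI)
      show "0 \<le> x i j" if "i \<in> {i \<in> DD. \<sigma> i = h s}" "j \<in> {h s}" for i j
        using x that \<open>h s \<in> FF\<close> unfolding is_assignment_def by auto
      show "(\<Sum>j\<in>{h s}. x i j) = Dm i" if "i \<in> {i \<in> DD. \<sigma> i = h s}" for i
        using row_s[OF that] by simp
      show "(\<Sum>i\<in>{i \<in> DD. \<sigma> i = h s}. x i j) \<le> C j" if "j \<in> {h s}" for j
        using load[OF \<open>h s \<in> FF\<close>] row_s that by (metis (no_types, lifting) singletonD sum.cong)
    qed
    then show "is_equilibrium {i \<in> DD. (g \<circ> \<sigma>) i = s} {j \<in> FF. g j = s} l Dm C x (\<lambda>_. 0)"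
      using region_F[OF \<open>s < card FF\<close>] region_D[OF \<open>s < card FF\<close>]
      by (simp add: is_equilibrium_singleton_iff)
  qed (use g \<open>\<sigma> ` DD \<subseteq> FF\<close> in \<open>auto simp: bij_betw_def\<close>)
  moreover have "reg_delay (card FF) DD FF l Dm (g \<circ> \<sigma>) g (\<lambda>_ _. 0) = assignment_cost DD FF l x"
  proof -
    have "reg_delay (card FF) DD FF l Dm (g \<circ> \<sigma>) g (\<lambda>_ _. 0)
        = (\<Sum>s<card FF. \<Sum>i\<in>{i \<in> DD. g (\<sigma> i) = s}. Dm i * l i (\<sigma> i))"
      unfolding reg_delay_def eq_delay_def
      by (intro sum.cong refl) (auto simp: region_F region_D)
    also have "\<dots> = (\<Sum>i\<in>DD. Dm i * l i (\<sigma> i))"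
      using \<open>finite DD\<close> g \<open>\<sigma> ` DD \<subseteq> FF\<close> by (intro sum.group) (auto simp: bij_betw_def)
    also have "\<dots> = assignment_cost DD FF l x"
      unfolding assignment_cost_def using row x_\<sigma> by (simp add: mult.commute)
    finally show ?thesis .
  qed
  ultimately show ?thesis by blast
qed

theorem theorem4p2:
  fixes DD :: "'d set" and FF :: "'f set"
    and l :: "'d \<Rightarrow> 'f \<Rightarrow> real" and C :: "'f \<Rightarrow> nat"
  assumes "finite DD" and "finite FF"
    and "\<forall>i\<in>DD. \<forall>j\<in>FF. 0 \<le> l i j"
    and "(\<Sum>i\<in>DD. (1::real)) \<le> (\<Sum>j\<in>FF. real (C j))"
  shows "\<exists>c.
     (\<exists>x. is_assignment DD FF (\<lambda>_. 1) (\<lambda>j. real (C j)) x \<and> assignment_cost DD FF l x = c) \<and>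
     (\<forall>x. is_assignment DD FF (\<lambda>_. 1) (\<lambda>j. real (C j)) x \<longrightarrow> c \<le> assignment_cost DD FF l x) \<and>
     (\<exists>pd pf xs bs. is_regionalized (card FF) DD FF l (\<lambda>_. 1) (\<lambda>j. real (C j)) pd pf xs bs \<and>
                    reg_delay (card FF) DD FF l (\<lambda>_. 1) pd pf bs = c) \<and>
     (\<forall>pd pf xs bs. is_regionalized (card FF) DD FF l (\<lambda>_. 1) (\<lambda>j. real (C j)) pd pf xs bs \<longrightarrow>
                    c \<le> reg_delay (card FF) DD FF l (\<lambda>_. 1) pd pf bs)"
proof -
  let ?assignment = "is_assignment DD FF (\<lambda>_. 1) (\<lambda>j. real (C j))"
  let ?regionalized = "is_regionalized (card FF) DD FF l (\<lambda>_. 1) (\<lambda>j. real (C j))"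
  obtain x0 where "?assignment x0"
    using assignment_exists[OF \<open>finite DD\<close>, of "\<lambda>_. 1" FF "\<lambda>j. real (C j)"] assms(4) by auto
  obtain \<sigma> where "\<sigma> ` DD \<subseteq> FF" and opt: "?assignment (assignment_of_map \<sigma>)"
    and least: "\<forall>x. ?assignment x \<longrightarrow>
                  assignment_cost DD FF l (assignment_of_map \<sigma>) \<le> assignment_cost DD FF l x"
    using min_cost_assignment_of_map[OF \<open>finite DD\<close> \<open>finite FF\<close> _ \<open>?assignment x0\<close>, where l = l]
    by auto
  have "\<exists>pd pf xs bs. ?regionalized pd pf xs bs \<and>
      reg_delay (card FF) DD FF l (\<lambda>_. 1) pd pf bs = assignment_cost DD FF l (assignment_of_map \<sigma>)"
    using regionalized_of_single_sourced[OF \<open>finite DD\<close> \<open>finite FF\<close> opt \<open>\<sigma> ` DD \<subseteq> FF\<close>]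
    by (simp add: assignment_of_map_def)
  moreover have "assignment_cost DD FF l (assignment_of_map \<sigma>) \<le> reg_delay (card FF) DD FF l (\<lambda>_. 1) pd pf bs"
    if "?regionalized pd pf xs bs" for pd pf xs bs
    using least is_assignment_regional_assignment[OF \<open>finite DD\<close> \<open>finite FF\<close> that]
      assignment_cost_regional_assignment_le[OF \<open>finite DD\<close> \<open>finite FF\<close> that]
    by (meson order_trans)
  ultimately show ?thesis using opt least by blast
qed

end
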